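(* Let $\mathcal{P}\subseteq\mathbb{Z}_{\geq0}$, working with formal power series over a commutative ring $R\supseteq\mathbb{Q}$. Then $$\Xi^{\mathrm{COMP},\mathcal{P}}(z)=F^{\mathcal{P}}(z)\ln F^{\mathcal{P}}(z).$$
   Context: $[n]=\{1,\dots,n\}$. $\mathcal{F}_n$ is the set of functions $f:[n]\to[n]$ with $|f^{-1}(x)|\in\mathcal{P}$ for all $x\in[n]$ ($\mathcal{F}_0$ = the empty function); $c(f)$ is the number of weakly connected components of the functional graph (edges $i\to f(i)$). $F^\mathcal{P}(z)=\sum_n|\mathcal{F}_n|z^n/n!$, $F^{\mathrm{COMP},\mathcal{P}}(u,z)=\sum_n\frac{z^n}{n!}\sum_{f\in\mathcal{F}_n}u^{c(f)}$, and $\Xi^{\mathrm{COMP},\mathcal{P}}(z)=\big(\partial_uF^{\mathrm{COMP},\mathcal{P}}(u,z)\big)|_{u=1}$. For a series $G$ with constant term $1$, $\ln G=\sum_{i\ge1}(1-G)^i/i\cdot(-1)^{0}$ computed as $\ln\big((1-(1-G))^{-1}\big)$ with $\ln((1-w)^{-1})=\sum_{i\ge1}w^i/i$. *)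

theory Defs
  imports "HOL-Library.FuncSet" "HOL-Computational_Algebra.Formal_Power_Series"
          "HOL-Computational_Algebra.Polynomial"
begin

text \<open>Coefficient ring: a commutative ring containing the rationals, i.e. a
  comm_ring_1 in which every positive integer is invertible.\<close>

definition natinv :: "nat \<Rightarrow> 'a::comm_ring_1" where
  "natinv k = (SOME x. of_nat k * x = 1)"

definition Pfuns :: "nat set \<Rightarrow> nat \<Rightarrow> (nat \<Rightarrow> nat) set" where
  "Pfuns P n = {f \<in> {1..n} \<rightarrow>\<^sub>E {1..n}.
                  \<forall>x\<in>{1..n}. card {i \<in> {1..n}. f i = x} \<in> P}"

definition ncomp :: "nat \<Rightarrow> (nat \<Rightarrow> nat) \<Rightarrow> nat" where
  "ncomp n f = (let E = {(i, f i) | i. i \<in> {1..n}}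
                in card ({1..n} // ((E \<union> E\<inverse>)\<^sup>*)))"

definition FP :: "nat set \<Rightarrow> 'a::comm_ring_1 fps" where
  "FP P = Abs_fps (\<lambda>n. of_nat (card (Pfuns P n)) * natinv (fact n))"

text \<open>Bivariate series F^COMP(u,z): coefficient of z^n is a polynomial in u.\<close>
definition FCOMP :: "nat set \<Rightarrow> 'a::comm_ring_1 poly fps" where
  "FCOMP P = Abs_fps (\<lambda>n. \<Sum>f\<in>Pfuns P n. monom (natinv (fact n)) (ncomp n f))"

text \<open>Formal derivative in u of a polynomial, evaluated at u = 1.\<close>
definition dpoly_at1 :: "'a::comm_ring_1 poly \<Rightarrow> 'a" where
  "dpoly_at1 p = (\<Sum>k\<le>degree p. of_nat k * coeff p k)"

definition XiCOMP :: "nat set \<Rightarrow> 'a::comm_ring_1 fps" where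
  "XiCOMP P = Abs_fps (\<lambda>n. dpoly_at1 (fps_nth (FCOMP P) n))"

text \<open>ln G = - sum_{i>=1} (1-G)^i / i for G with constant term 1; the sum is
  formally convergent since (1-G)^i has subdegree >= i.\<close>
definition fps_ln1 :: "'a::comm_ring_1 fps \<Rightarrow> 'a fps" where
  "fps_ln1 G = Abs_fps (\<lambda>n. - (\<Sum>i=1..n. natinv i * fps_nth ((1 - G) ^ i) n))"

end

theory Submission
  imports Defs
begin

(* Removing a component K from f in F_n leaves a function on the complement of K that
   still lies in the P-class, so pairs (f, K) correspond to triples (K, connected
   P-function on K, P-function on the complement).  Summing over such pairs with
   weight 1 and with weight |K| gives, for the EGF C of connected P-functions,
   Xi = C F and z F' = z C' F.  Hence (ln F)' = F'/F = C', and since ln F and C both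
   have constant term 0, ln F = C. *)

unbundle fps_syntax

section \<open>Components of a functional graph\<close>

definition Pfuns_on :: "nat set \<Rightarrow> 'b set \<Rightarrow> ('b \<Rightarrow> 'b) set" where
  "Pfuns_on P S = {f \<in> S \<rightarrow>\<^sub>E S. \<forall>x\<in>S. card {i \<in> S. f i = x} \<in> P}"

definition graph_rel :: "'b set \<Rightarrow> ('b \<Rightarrow> 'b) \<Rightarrow> ('b \<times> 'b) set" where
  "graph_rel S f = (let E = {(i, f i) | i. i \<in> S} in (E \<union> E\<inverse>)\<^sup>*)"

definition components :: "'b set \<Rightarrow> ('b \<Rightarrow> 'b) \<Rightarrow> 'b set set" where
  "components S f = S // graph_rel S f"

(* The saturated sets are exactly the unions of components. *)
definition saturated :: "'b set \<Rightarrow> ('b \<Rightarrow> 'b) \<Rightarrow> 'b set \<Rightarrow> bool" where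
  "saturated S f T \<longleftrightarrow> T \<subseteq> S \<and> (\<forall>i\<in>S. i \<in> T \<longleftrightarrow> f i \<in> T)"

definition connected_fun :: "'b set \<Rightarrow> ('b \<Rightarrow> 'b) \<Rightarrow> bool" where
  "connected_fun S f \<longleftrightarrow> S \<noteq> {} \<and> (\<forall>T. saturated S f T \<longrightarrow> T = {} \<or> T = S)"

definition connected_Pfuns :: "nat set \<Rightarrow> 'b set \<Rightarrow> ('b \<Rightarrow> 'b) set" where
  "connected_Pfuns P S = {f \<in> Pfuns_on P S. connected_fun S f}"

definition is_component :: "'b set \<Rightarrow> ('b \<Rightarrow> 'b) \<Rightarrow> 'b set \<Rightarrow> bool" where
  "is_component S f K \<longleftrightarrow>
     saturated S f K \<and> K \<noteq> {} \<and> (\<forall>T. saturated S f T \<longrightarrow> T \<inter> K = {} \<or> K \<subseteq> T)"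

lemma Pfuns_eq_Pfuns_on: "Pfuns P n = Pfuns_on P {1..n}"
  unfolding Pfuns_def Pfuns_on_def by simp

lemma ncomp_eq_card_components: "ncomp n f = card (components {1..n} f)"
  unfolding ncomp_def components_def graph_rel_def Let_def by simp

lemma Pfuns_on_subset_PiE: "Pfuns_on P S \<subseteq> S \<rightarrow>\<^sub>E S"
  unfolding Pfuns_on_def by auto

lemma finite_Pfuns_on: "finite S \<Longrightarrow> finite (Pfuns_on P S)"
  unfolding Pfuns_on_def by (rule finite_subset[OF _ finite_PiE]) auto

lemma finite_connected_Pfuns: "finite S \<Longrightarrow> finite (connected_Pfuns P S)"
  unfolding connected_Pfuns_def by (simp add: finite_Pfuns_on)

lemma finite_components: "finite S \<Longrightarrow> finite (components S f)"
  unfolding components_def quotient_def by simp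

lemma graph_rel_refl: "(x, x) \<in> graph_rel S f"
  unfolding graph_rel_def Let_def by simp

lemma graph_rel_sym: "(x, y) \<in> graph_rel S f \<Longrightarrow> (y, x) \<in> graph_rel S f"
  unfolding graph_rel_def Let_def using sym_rtrancl[OF sym_Un_converse] by (meson symD)

lemma graph_rel_trans: "(x, y) \<in> graph_rel S f \<Longrightarrow> (y, z) \<in> graph_rel S f \<Longrightarrow> (x, z) \<in> graph_rel S f"
  unfolding graph_rel_def Let_def by simp

lemma graph_rel_step_iff: "i \<in> S \<Longrightarrow> (x, f i) \<in> graph_rel S f \<longleftrightarrow> (x, i) \<in> graph_rel S f"
  unfolding graph_rel_def Let_def by (auto elim: rtrancl_into_rtrancl)

lemma saturated_graph_rel_closed:
  assumes "saturated S f T" "x \<in> T" "(x, y) \<in> graph_rel S f"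
  shows "y \<in> T"
  using assms(3) unfolding graph_rel_def Let_def
  by (induction rule: rtrancl_induct) (use assms(1,2) in \<open>auto simp: saturated_def\<close>)

lemma saturated_Int: "saturated S f T \<Longrightarrow> saturated S f U \<Longrightarrow> saturated S f (T \<inter> U)"
  unfolding saturated_def by auto

lemma saturated_restrict_iff:
  assumes "saturated S f K"
  shows "saturated K (restrict f K) T \<longleftrightarrow> T \<subseteq> K \<and> saturated S f T"
  using assms unfolding saturated_def by auto

lemma saturated_graph_rel_class:
  assumes "f ` S \<subseteq> S" "x \<in> S"
  shows "saturated S f (graph_rel S f `` {x})"
proof -
  have "saturated S f S" using assms(1) unfolding saturated_def by auto
  then have "graph_rel S f `` {x} \<subseteq> S"
    using saturated_graph_rel_closed assms(2) by fastforce
  then show ?thesis unfolding saturated_def by (auto simp: graph_rel_step_iff)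
qed

lemma components_eq_is_component:
  assumes fS: "f ` S \<subseteq> S"
  shows "components S f = {K. is_component S f K}"
proof (intro set_eqI iffI)
  fix K assume "K \<in> components S f"
  then obtain x where x: "x \<in> S" and K: "K = graph_rel S f `` {x}"
    unfolding components_def quotient_def by auto
  have "T \<inter> K = {} \<or> K \<subseteq> T" if T: "saturated S f T" for T
  proof (cases "T \<inter> K = {}")
    case False
    then obtain y where y: "y \<in> T" and xy: "(x, y) \<in> graph_rel S f" using K by auto
    have "z \<in> T" if "z \<in> K" for z
      using saturated_graph_rel_closed[OF T y] graph_rel_trans[OF graph_rel_sym[OF xy]] that K
      by auto
    then show ?thesis by auto
  qed simp
  then show "K \<in> {K. is_component S f K}"
    using saturated_graph_rel_class[OF fS x] K graph_rel_refl[of x S f]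
    unfolding is_component_def by auto
next
  fix K assume "K \<in> {K. is_component S f K}"
  then have sat: "saturated S f K" and "K \<noteq> {}"
    and min: "\<And>T. saturated S f T \<Longrightarrow> T \<inter> K = {} \<or> K \<subseteq> T"
    unfolding is_component_def by auto
  then obtain x where x: "x \<in> K" by auto
  have xS: "x \<in> S" using sat x unfolding saturated_def by auto
  have "K \<subseteq> graph_rel S f `` {x}"
    using min[OF saturated_graph_rel_class[OF fS xS]] x graph_rel_refl[of x S f] by auto
  moreover have "graph_rel S f `` {x} \<subseteq> K" using saturated_graph_rel_closed[OF sat x] by auto
  ultimately show "K \<in> components S f" unfolding components_def quotient_def using xS by auto
qed

lemma is_component_iff_connected:
  assumes K: "saturated S f K"
  shows "is_component S f K \<longleftrightarrow> connected_fun K (restrict f K)"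
proof
  assume "is_component S f K"
  then show "connected_fun K (restrict f K)"
    unfolding is_component_def connected_fun_def saturated_restrict_iff[OF K] by blast
next
  assume conn: "connected_fun K (restrict f K)"
  have "T \<inter> K = {} \<or> K \<subseteq> T" if T: "saturated S f T" for T
  proof -
    have "saturated K (restrict f K) (T \<inter> K)"
      using saturated_restrict_iff[OF K] saturated_Int[OF T K] by auto
    then show ?thesis using conn unfolding connected_fun_def by blast
  qed
  then show "is_component S f K" using conn K unfolding is_component_def connected_fun_def by auto
qed

lemma mem_components_iff:
  assumes "f ` S \<subseteq> S"
  shows "K \<in> components S f \<longleftrightarrow> saturated S f K \<and> connected_fun K (restrict f K)"
proof (cases "saturated S f K")
  case True
  then show ?thesis
    using components_eq_is_component[OF assms] is_component_iff_connected[OF True] by simp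
next
  case False
  then show ?thesis using components_eq_is_component[OF assms] unfolding is_component_def by simp
qed

lemma sum_card_components:
  assumes S: "finite S" and fS: "f ` S \<subseteq> S"
  shows "(\<Sum>K\<in>components S f. card K) = card S"
proof -
  have "\<Union>(components S f) \<subseteq> S"
    using mem_components_iff[OF fS] unfolding saturated_def by auto
  moreover have "S \<subseteq> \<Union>(components S f)"
  proof
    fix x assume "x \<in> S"
    then have "graph_rel S f `` {x} \<in> components S f"
      unfolding components_def by (rule quotientI)
    then show "x \<in> \<Union>(components S f)" using graph_rel_refl[of x S f] by blast
  qed
  ultimately have U: "\<Union>(components S f) = S" by blast
  have "pairwise disjnt (components S f)"
  proof (rule pairwiseI)
    fix K L assume "K \<in> components S f" "L \<in> components S f" "K \<noteq> L"
    then have "is_component S f K" "is_component S f L"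
      using components_eq_is_component[OF fS] by auto
    then have "K \<inter> L = {} \<or> K \<subseteq> L" "L \<inter> K = {} \<or> L \<subseteq> K"
      unfolding is_component_def by auto
    then show "disjnt K L" using \<open>K \<noteq> L\<close> unfolding disjnt_def by auto
  qed
  moreover have "finite K" if "K \<in> components S f" for K
    using U S that by (metis Union_upper finite_subset)
  ultimately have "card (\<Union>(components S f)) = (\<Sum>K\<in>components S f. card K)"
    by (rule card_Union_disjoint)
  then show ?thesis using U by simp
qed

section \<open>Splitting off a component\<close>

lemma Pfuns_on_split:
  assumes f: "f \<in> S \<rightarrow>\<^sub>E S" and K: "saturated S f K"
  shows "f \<in> Pfuns_on P S \<longleftrightarrow>
    restrict f K \<in> Pfuns_on P K \<and> restrict f (S - K) \<in> Pfuns_on P (S - K)"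
proof -
  have KS: "K \<subseteq> S" and sat: "\<And>i. i \<in> S \<Longrightarrow> i \<in> K \<longleftrightarrow> f i \<in> K"
    using K unfolding saturated_def by auto
  have "restrict f K \<in> K \<rightarrow>\<^sub>E K" "restrict f (S - K) \<in> (S - K) \<rightarrow>\<^sub>E (S - K)"
    using sat KS f by auto
  moreover have "{i \<in> K. restrict f K i = x} = {i \<in> S. f i = x}" if "x \<in> K" for x
    using that sat KS by auto
  moreover have "{i \<in> S - K. restrict f (S - K) i = x} = {i \<in> S. f i = x}" if "x \<in> S - K" for x
    using that sat KS by auto
  ultimately show ?thesis unfolding Pfuns_on_def using f KS by auto
qed

lemma restrict_component_mem:
  assumes f: "f \<in> Pfuns_on P S" and K: "K \<in> components S f"
  shows "K \<subseteq> S" "restrict f K \<in> connected_Pfuns P K"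
    "restrict f (S - K) \<in> Pfuns_on P (S - K)"
    "override_on (restrict f (S - K)) (restrict f K) K = f"
proof -
  have fE: "f \<in> S \<rightarrow>\<^sub>E S" using f unfolding Pfuns_on_def by auto
  then have "saturated S f K" "connected_fun K (restrict f K)"
    using K mem_components_iff[of f S K] by auto
  then show "K \<subseteq> S" "restrict f K \<in> connected_Pfuns P K"
    "restrict f (S - K) \<in> Pfuns_on P (S - K)"
    using Pfuns_on_split[OF fE, of K P] f unfolding connected_Pfuns_def saturated_def by auto
  then show "override_on (restrict f (S - K)) (restrict f K) K = f"
    using PiE_arb[OF fE] by (auto simp: override_on_def)
qed

lemma override_component_mem:
  assumes KS: "K \<subseteq> S" and g: "g \<in> connected_Pfuns P K" and h: "h \<in> Pfuns_on P (S - K)"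
  defines "f \<equiv> override_on h g K"
  shows "f \<in> Pfuns_on P S" "K \<in> components S f" "restrict f K = g" "restrict f (S - K) = h"
proof -
  have gE: "g \<in> K \<rightarrow>\<^sub>E K" and hE: "h \<in> (S - K) \<rightarrow>\<^sub>E (S - K)"
    using g h unfolding connected_Pfuns_def Pfuns_on_def by auto
  show rK: "restrict f K = g" and rSK: "restrict f (S - K) = h"
    using PiE_arb[OF gE] PiE_arb[OF hE] by (auto simp: f_def override_on_def)
  have fE: "f \<in> S \<rightarrow>\<^sub>E S"
  proof (rule PiE_I)
    show "f x \<in> S" if "x \<in> S" for x
      using that gE hE KS by (auto simp: f_def override_on_def)
    show "f x = undefined" if "x \<notin> S" for x
      using that PiE_arb[OF hE] KS by (auto simp: f_def override_on_def)
  qed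
  have sat: "saturated S f K"
    using gE hE KS unfolding saturated_def f_def override_on_def by auto
  show "f \<in> Pfuns_on P S"
    using Pfuns_on_split[OF fE sat] rK rSK g h by (simp add: connected_Pfuns_def)
  show "K \<in> components S f"
    using mem_components_iff[of f S K] fE sat rK g by (auto simp: connected_Pfuns_def)
qed

lemma sum_components_Pow:
  fixes w :: "'b set \<Rightarrow> nat"
  assumes S: "finite S"
  shows "(\<Sum>f\<in>Pfuns_on P S. \<Sum>K\<in>components S f. w K) =
    (\<Sum>K\<in>Pow S. w K * (card (connected_Pfuns P K) * card (Pfuns_on P (S - K))))"
proof -
  have finK: "finite K" if "K \<in> Pow S" for K using that S by (auto intro: finite_subset)
  have "(\<Sum>f\<in>Pfuns_on P S. \<Sum>K\<in>components S f. w K) =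
      (\<Sum>(f, K)\<in>Sigma (Pfuns_on P S) (components S). w K)"
    by (rule sum.Sigma) (use S finite_Pfuns_on finite_components in auto)
  also have "\<dots> = (\<Sum>(K, gh)\<in>Sigma (Pow S) (\<lambda>K. connected_Pfuns P K \<times> Pfuns_on P (S - K)). w K)"
    by (rule sum.reindex_bij_witness[where j = "\<lambda>(f, K). (K, restrict f K, restrict f (S - K))"
          and i = "\<lambda>(K, g, h). (override_on h g K, K)"])
       (auto simp: restrict_component_mem override_component_mem
             dest: restrict_component_mem(1)[THEN subsetD])
  also have "\<dots> = (\<Sum>K\<in>Pow S. \<Sum>gh\<in>connected_Pfuns P K \<times> Pfuns_on P (S - K). w K)"
    by (rule sum.Sigma[symmetric])
       (use S finK in \<open>auto intro!: finite_cartesian_product finite_Pfuns_on finite_connected_Pfuns\<close>)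
  also have "\<dots> = (\<Sum>K\<in>Pow S. w K * (card (connected_Pfuns P K) * card (Pfuns_on P (S - K))))"
    by (simp add: card_cartesian_product mult.commute)
  finally show ?thesis .
qed

definition relabel :: "('b \<Rightarrow> 'c) \<Rightarrow> 'b set \<Rightarrow> ('b \<Rightarrow> 'b) \<Rightarrow> 'c \<Rightarrow> 'c" where
  "relabel h S f = restrict (h \<circ> f \<circ> inv_into S h) (h ` S)"

lemma relabel_apply: "inj_on h S \<Longrightarrow> x \<in> S \<Longrightarrow> relabel h S f (h x) = h (f x)"
  by (simp add: relabel_def)

lemma relabel_in_PiE: "f ` S \<subseteq> S \<Longrightarrow> relabel h S f \<in> h ` S \<rightarrow>\<^sub>E h ` S"
  unfolding relabel_def by (auto intro!: imageI inv_into_into)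

lemma fibre_relabel:
  assumes h: "inj_on h S" and fS: "f ` S \<subseteq> S" and x: "x \<in> S"
  shows "{y \<in> h ` S. relabel h S f y = h x} = h ` {i \<in> S. f i = x}"
  using h fS x by (auto simp: relabel_apply inj_on_eq_iff)

lemma Pfuns_on_relabel:
  assumes h: "inj_on h S" and f: "f \<in> Pfuns_on P S"
  shows "relabel h S f \<in> Pfuns_on P (h ` S)"
proof -
  have fS: "f ` S \<subseteq> S" using f unfolding Pfuns_on_def by auto
  have "card {y \<in> h ` S. relabel h S f y = h x} \<in> P" if "x \<in> S" for x
  proof -
    have "card {y \<in> h ` S. relabel h S f y = h x} = card {i \<in> S. f i = x}"
      unfolding fibre_relabel[OF h fS that] by (rule card_image) (rule inj_on_subset[OF h], auto)
    then show ?thesis using f that unfolding Pfuns_on_def by auto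
  qed
  moreover have "relabel h S f \<in> h ` S \<rightarrow>\<^sub>E h ` S" by (rule relabel_in_PiE[OF fS])
  ultimately show ?thesis unfolding Pfuns_on_def by auto
qed

lemma saturated_relabel_preimage:
  assumes h: "inj_on h S" and fS: "f ` S \<subseteq> S" and U: "saturated (h ` S) (relabel h S f) U"
  shows "saturated S f {i \<in> S. h i \<in> U}"
  using U fS unfolding saturated_def by (auto simp: relabel_apply[OF h])

lemma connected_fun_relabel:
  assumes h: "inj_on h S" and fS: "f ` S \<subseteq> S" and conn: "connected_fun S f"
  shows "connected_fun (h ` S) (relabel h S f)"
  unfolding connected_fun_def
proof (intro conjI allI impI)
  show "h ` S \<noteq> {}" using conn unfolding connected_fun_def by auto
  fix U assume U: "saturated (h ` S) (relabel h S f) U"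
  then have "{i \<in> S. h i \<in> U} = {} \<or> {i \<in> S. h i \<in> U} = S"
    using saturated_relabel_preimage[OF h fS] conn unfolding connected_fun_def by blast
  moreover have "U \<subseteq> h ` S" using U unfolding saturated_def by auto
  ultimately show "U = {} \<or> U = h ` S" by auto
qed

lemma inj_on_relabel:
  assumes h: "inj_on h S"
  shows "inj_on (relabel h S) (S \<rightarrow>\<^sub>E S)"
proof
  fix f g assume f: "f \<in> S \<rightarrow>\<^sub>E S" and g: "g \<in> S \<rightarrow>\<^sub>E S" and eq: "relabel h S f = relabel h S g"
  show "f = g"
  proof
    fix x show "f x = g x"
    proof (cases "x \<in> S")
      case True
      then have "h (f x) = h (g x)" using eq relabel_apply[OF h] by metis
      moreover have "f x \<in> S" "g x \<in> S" using True f g by auto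
      ultimately show ?thesis by (rule inj_onD[OF h])
    qed (use PiE_arb[OF f] PiE_arb[OF g] in simp)
  qed
qed

lemma card_Pfuns_on_le:
  assumes "inj_on h S" "finite S"
  shows "card (Pfuns_on P S) \<le> card (Pfuns_on P (h ` S))"
  using Pfuns_on_subset_PiE
  by (intro card_inj_on_le[where f = "relabel h S"] inj_on_subset[OF inj_on_relabel[OF assms(1)]])
     (auto simp: Pfuns_on_relabel[OF assms(1)] finite_Pfuns_on assms(2))

lemma card_connected_Pfuns_le:
  assumes "inj_on h S" "finite S"
  shows "card (connected_Pfuns P S) \<le> card (connected_Pfuns P (h ` S))"
proof (intro card_inj_on_le[where f = "relabel h S"] inj_on_subset[OF inj_on_relabel[OF assms(1)]])
  show "connected_Pfuns P S \<subseteq> S \<rightarrow>\<^sub>E S"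
    using Pfuns_on_subset_PiE unfolding connected_Pfuns_def by blast
  show "relabel h S ` connected_Pfuns P S \<subseteq> connected_Pfuns P (h ` S)"
  proof (rule image_subsetI)
    fix f assume "f \<in> connected_Pfuns P S"
    then have f: "f \<in> Pfuns_on P S" and conn: "connected_fun S f"
      unfolding connected_Pfuns_def by auto
    then have "f ` S \<subseteq> S" using Pfuns_on_subset_PiE by blast
    then show "relabel h S f \<in> connected_Pfuns P (h ` S)"
      using Pfuns_on_relabel[OF assms(1) f] connected_fun_relabel[OF assms(1) _ conn]
      unfolding connected_Pfuns_def by simp
  qed
qed (simp add: finite_connected_Pfuns assms(2))

lemma card_Pfuns_on_eq:
  assumes "finite S" "finite T" "card S = card T"
  shows "card (Pfuns_on P S) = card (Pfuns_on P T)"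
    and "card (connected_Pfuns P S) = card (connected_Pfuns P T)"
proof -
  obtain h where h: "bij_betw h S T" using finite_same_card_bij[OF assms] by auto
  then have h': "bij_betw (inv_into S h) T S" by (rule bij_betw_inv_into)
  show "card (Pfuns_on P S) = card (Pfuns_on P T)"
    using card_Pfuns_on_le[of h S P] card_Pfuns_on_le[of "inv_into S h" T P] h h' assms
    unfolding bij_betw_def by (simp add: antisym)
  show "card (connected_Pfuns P S) = card (connected_Pfuns P T)"
    using card_connected_Pfuns_le[of h S P] card_connected_Pfuns_le[of "inv_into S h" T P] h h' assms
    unfolding bij_betw_def by (simp add: antisym)
qed

definition num_Pfuns :: "nat set \<Rightarrow> nat \<Rightarrow> nat" where
  "num_Pfuns P n = card (Pfuns P n)"

definition num_connected :: "nat set \<Rightarrow> nat \<Rightarrow> nat" where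
  "num_connected P n = card (connected_Pfuns P {1..n})"

definition binomial_conv :: "(nat \<Rightarrow> nat) \<Rightarrow> (nat \<Rightarrow> nat) \<Rightarrow> nat \<Rightarrow> nat" where
  "binomial_conv a b n = (\<Sum>k\<le>n. (n choose k) * (a k * b (n - k)))"

lemma sum_Pow_card:
  fixes g :: "nat \<Rightarrow> 'c::comm_semiring_1"
  assumes S: "finite S"
  shows "(\<Sum>K\<in>Pow S. g (card K)) = (\<Sum>k\<le>card S. of_nat (card S choose k) * g k)"
proof -
  have "(\<Sum>K\<in>Pow S. g (card K)) = (\<Sum>k\<le>card S. \<Sum>K\<in>{K \<in> Pow S. card K = k}. g (card K))"
    by (rule sum.group[symmetric]) (use S in \<open>auto intro: card_mono\<close>)
  also have "\<dots> = (\<Sum>k\<le>card S. of_nat (card S choose k) * g k)"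
    using n_subsets[OF S] by (intro sum.cong refl) (simp add: Pow_def)
  finally show ?thesis .
qed

lemma sum_components_binomial_conv:
  "(\<Sum>f\<in>Pfuns P n. \<Sum>K\<in>components {1..n} f. w (card K)) =
    binomial_conv (\<lambda>k. w k * num_connected P k) (num_Pfuns P) n"
proof -
  have "(\<Sum>f\<in>Pfuns P n. \<Sum>K\<in>components {1..n} f. w (card K)) =
      (\<Sum>K\<in>Pow {1..n}. w (card K) * (num_connected P (card K) * num_Pfuns P (n - card K)))"
    unfolding Pfuns_eq_Pfuns_on sum_components_Pow[OF finite_atLeastAtMost]
  proof (intro sum.cong refl)
    fix K assume K: "K \<in> Pow {1..n}"
    then have "finite K" by (auto intro: finite_subset)
    then show "w (card K) * (card (connected_Pfuns P K) * card (Pfuns_on P ({1..n} - K))) =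
        w (card K) * (num_connected P (card K) * num_Pfuns P (n - card K))"
      using K card_Pfuns_on_eq[of K "{1..card K}" P]
        card_Pfuns_on_eq[of "{1..n} - K" "{1..n - card K}" P]
      by (simp add: num_connected_def num_Pfuns_def Pfuns_eq_Pfuns_on card_Diff_subset)
  qed
  also have "\<dots> = binomial_conv (\<lambda>k. w k * num_connected P k) (num_Pfuns P) n"
    using sum_Pow_card[of "{1..n}" "\<lambda>k. w k * (num_connected P k * num_Pfuns P (n - k))"]
    by (simp add: binomial_conv_def mult.assoc)
  finally show ?thesis .
qed

lemma sum_ncomp_Pfuns:
  "(\<Sum>f\<in>Pfuns P n. ncomp n f) = binomial_conv (num_connected P) (num_Pfuns P) n"
  using sum_components_binomial_conv[where w = "\<lambda>_. 1" and P = P and n = n]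
  by (simp add: ncomp_eq_card_components)

lemma mult_num_Pfuns:
  "n * num_Pfuns P n = binomial_conv (\<lambda>k. k * num_connected P k) (num_Pfuns P) n"
proof -
  have "(\<Sum>K\<in>components {1..n} f. card K) = n" if "f \<in> Pfuns P n" for f
    using that sum_card_components[of "{1..n}" f]
    unfolding Pfuns_eq_Pfuns_on Pfuns_on_def by auto
  then show ?thesis
    using sum_components_binomial_conv[where w = id and P = P and n = n]
    by (simp add: num_Pfuns_def mult.commute)
qed

section \<open>Exponential generating functions\<close>

lemma natinv_inverse:
  assumes "\<And>k::nat. k > 0 \<Longrightarrow> \<exists>x::'a::comm_ring_1. of_nat k * x = 1" and "k > 0"
  shows "of_nat k * (natinv k :: 'a) = 1"
  unfolding natinv_def using someI_ex[OF assms(1)[OF assms(2)]] .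

lemma natinv_mult:
  assumes inv: "\<And>k. k > 0 \<Longrightarrow> of_nat k * (natinv k :: 'a::comm_ring_1) = 1"
    and "a > 0" "b > 0"
  shows "(natinv (a * b) :: 'a) = natinv a * natinv b"
proof -
  have "(natinv a * natinv b :: 'a) = natinv a * natinv b * (of_nat (a * b) * natinv (a * b))"
    using inv[of "a * b"] assms by simp
  also have "\<dots> = (of_nat a * natinv a) * (of_nat b * natinv b) * natinv (a * b)"
    by (simp add: algebra_simps)
  also have "\<dots> = natinv (a * b)" using inv assms by simp
  finally show ?thesis by simp
qed

lemma of_nat_choose_mult_natinv_fact:
  assumes inv: "\<And>k. k > 0 \<Longrightarrow> of_nat k * (natinv k :: 'a::comm_ring_1) = 1"
    and "k \<le> n"
  shows "of_nat (n choose k) * (natinv (fact n) :: 'a) = natinv (fact k) * natinv (fact (n - k))"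
proof -
  have pos: "n choose k > 0" using \<open>k \<le> n\<close> by simp
  have "fact n = fact k * fact (n - k) * (n choose k)"
    using binomial_fact_lemma[OF \<open>k \<le> n\<close>] by simp
  then have "(natinv (fact n) :: 'a) = natinv (fact k) * natinv (fact (n - k)) * natinv (n choose k)"
    using pos by (simp add: natinv_mult[OF inv] fact_gt_zero)
  then have "of_nat (n choose k) * (natinv (fact n) :: 'a) =
      (of_nat (n choose k) * natinv (n choose k)) * (natinv (fact k) * natinv (fact (n - k)))"
    by (simp add: ac_simps)
  then show ?thesis using inv[OF pos] by simp
qed

definition egf :: "(nat \<Rightarrow> nat) \<Rightarrow> 'a::comm_ring_1 fps" where
  "egf a = Abs_fps (\<lambda>n. of_nat (a n) * natinv (fact n))"

lemma egf_mult:
  assumes inv: "\<And>k. k > 0 \<Longrightarrow> of_nat k * (natinv k :: 'a::comm_ring_1) = 1"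
  shows "egf a * egf b = (egf (binomial_conv a b) :: 'a fps)"
proof (rule fps_ext)
  fix n
  have coeff_prod: "(egf a $ k * egf b $ (n - k) :: 'a) =
      of_nat ((n choose k) * (a k * b (n - k))) * natinv (fact n)" if "k \<le> n" for k
  proof -
    have "(egf a $ k * egf b $ (n - k) :: 'a) =
        of_nat (a k * b (n - k)) * (natinv (fact k) * natinv (fact (n - k)))"
      by (simp add: egf_def algebra_simps)
    also have "\<dots> = of_nat (a k * b (n - k)) * (of_nat (n choose k) * natinv (fact n))"
      by (simp only: of_nat_choose_mult_natinv_fact[OF inv that])
    also have "\<dots> = of_nat ((n choose k) * (a k * b (n - k))) * natinv (fact n)"
      by (simp add: algebra_simps)
    finally show ?thesis .
  qed
  have "(egf a * egf b :: 'a fps) $ n =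
        (\<Sum>k\<le>n. of_nat ((n choose k) * (a k * b (n - k))) * natinv (fact n))"
    unfolding fps_mult_nth atLeast0AtMost by (intro sum.cong refl) (simp add: coeff_prod)
  also have "\<dots> = egf (binomial_conv a b) $ n"
    by (simp add: egf_def binomial_conv_def sum_distrib_right)
  finally show "(egf a * egf b :: 'a fps) $ n = egf (binomial_conv a b) $ n" .
qed

lemma fps_X_mult_deriv_egf:
  "fps_X * fps_deriv (egf a) = (egf (\<lambda>n. n * a n) :: 'a::comm_ring_1 fps)"
proof (rule fps_ext)
  fix n show "(fps_X * fps_deriv (egf a)) $ n = (egf (\<lambda>n. n * a n) :: 'a fps) $ n"
    by (cases n) (simp_all add: egf_def mult.assoc)
qed

lemma dpoly_at1_eq:
  assumes "degree p \<le> N"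
  shows "dpoly_at1 p = (\<Sum>k\<le>N. of_nat k * coeff p k)"
  unfolding dpoly_at1_def
  by (rule sum.mono_neutral_left) (use assms in \<open>auto simp: coeff_eq_0\<close>)

lemma dpoly_at1_add: "dpoly_at1 (p + q) = dpoly_at1 p + dpoly_at1 q"
proof -
  define N where "N = max (degree p) (degree q)"
  have "degree (p + q) \<le> N" unfolding N_def by (rule degree_add_le) auto
  then have "dpoly_at1 (p + q) = (\<Sum>k\<le>N. of_nat k * coeff (p + q) k)" by (rule dpoly_at1_eq)
  also have "\<dots> = (\<Sum>k\<le>N. of_nat k * coeff p k) + (\<Sum>k\<le>N. of_nat k * coeff q k)"
    by (simp add: distrib_left sum.distrib)
  also have "\<dots> = dpoly_at1 p + dpoly_at1 q"
    using dpoly_at1_eq[of p N] dpoly_at1_eq[of q N] unfolding N_def by simp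
  finally show ?thesis .
qed

lemma dpoly_at1_sum: "dpoly_at1 (\<Sum>x\<in>A. p x) = (\<Sum>x\<in>A. dpoly_at1 (p x))"
proof (induction A rule: infinite_finite_induct)
  case (insert x A)
  then show ?case by (simp add: dpoly_at1_add)
qed (simp_all add: dpoly_at1_def)

lemma dpoly_at1_monom: "dpoly_at1 (monom c m) = of_nat m * c"
proof -
  have "dpoly_at1 (monom c m) = (\<Sum>k\<le>m. of_nat k * coeff (monom c m) k)"
    by (rule dpoly_at1_eq) (simp add: degree_monom_le)
  also have "\<dots> = of_nat m * c"
    by (simp add: coeff_monom if_distrib sum.delta cong: if_cong)
  finally show ?thesis .
qed

lemma FP_eq_egf: "FP P = egf (num_Pfuns P)"
  unfolding FP_def egf_def num_Pfuns_def ..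

lemma XiCOMP_eq_egf: "XiCOMP P = egf (\<lambda>n. \<Sum>f\<in>Pfuns P n. ncomp n f)"
  unfolding XiCOMP_def FCOMP_def egf_def
  by (simp add: dpoly_at1_sum dpoly_at1_monom sum_distrib_right)

lemma FP_nth_0:
  assumes inv: "\<And>k. k > 0 \<Longrightarrow> of_nat k * (natinv k :: 'a::comm_ring_1) = 1"
  shows "(FP P :: 'a fps) $ 0 = 1"
proof -
  have "Pfuns P 0 = {\<lambda>_. undefined}" unfolding Pfuns_def by auto
  then show ?thesis unfolding FP_def using inv[of 1] by simp
qed

section \<open>The logarithm\<close>

lemma power_nth_eq_0_below:
  fixes G :: "'a::comm_ring_1 fps"
  assumes "G $ 0 = 0" and "n < i"
  shows "(G ^ i) $ n = 0"
proof (cases "G = 0")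
  case False
  then have "subdegree G \<noteq> 0" using assms(1) by (simp add: subdegree_eq_0_iff)
  then have "i \<le> i * subdegree G" by simp
  then have "n < i * subdegree G" using assms(2) by linarith
  then show ?thesis by (rule fps_pow_nth_below_subdegree)
qed (use assms(2) in \<open>cases i, simp_all\<close>)

definition fps_ln1_trunc :: "nat \<Rightarrow> 'a::comm_ring_1 fps \<Rightarrow> 'a fps" where
  "fps_ln1_trunc N F = - (\<Sum>i<N. fps_const (natinv (Suc i)) * (1 - F) ^ Suc i)"

lemma fps_ln1_nth_eq_trunc:
  fixes F :: "'a::comm_ring_1 fps"
  assumes "F $ 0 = 1" and "n \<le> N"
  shows "fps_ln1 F $ n = fps_ln1_trunc N F $ n"
proof -
  have G0: "(1 - F) $ 0 = 0" using assms(1) by simp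
  have "fps_ln1 F $ n = - (\<Sum>i<n. natinv (Suc i) * ((1 - F) ^ Suc i) $ n)"
    unfolding fps_ln1_def by (simp add: sum.atLeast1_atMost_eq del: power_Suc)
  also have "\<dots> = - (\<Sum>i<N. natinv (Suc i) * ((1 - F) ^ Suc i) $ n)"
    using assms(2) power_nth_eq_0_below[OF G0, of n]
    by (intro arg_cong[where f=uminus] sum.mono_neutral_left) (auto simp del: power_Suc)
  also have "\<dots> = fps_ln1_trunc N F $ n"
    unfolding fps_ln1_trunc_def by (simp add: fps_sum_nth)
  finally show ?thesis .
qed

lemma fps_deriv_ln1_trunc:
  fixes F :: "'a::comm_ring_1 fps"
  assumes inv: "\<And>k. k > 0 \<Longrightarrow> of_nat k * (natinv k :: 'a) = 1"
  shows "F * fps_deriv (fps_ln1_trunc N F) = fps_deriv F * (1 - (1 - F) ^ N)"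
proof -
  have deriv_term: "fps_const (natinv (Suc i)) * fps_deriv ((1 - F) ^ Suc i) =
      - (fps_deriv F * (1 - F) ^ i)" for i
  proof -
    have "fps_const (natinv (Suc i)) * fps_deriv ((1 - F) ^ Suc i) =
        fps_const (natinv (Suc i) * of_nat (Suc i)) * fps_deriv (1 - F) * (1 - F) ^ i"
      by (simp only: fps_deriv_power fps_const_mult[symmetric] diff_Suc_1 mult.assoc)
    also have "natinv (Suc i) * of_nat (Suc i) = (1::'a)"
      using inv[of "Suc i"] by (simp add: mult.commute)
    finally show ?thesis by simp
  qed
  have "fps_deriv (fps_ln1_trunc N F) =
      - (\<Sum>i<N. fps_const (natinv (Suc i)) * fps_deriv ((1 - F) ^ Suc i))"
    unfolding fps_ln1_trunc_def by (simp only: fps_deriv_neg fps_deriv_sum fps_deriv_mult_const_left)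
  also have "\<dots> = fps_deriv F * (\<Sum>i<N. (1 - F) ^ i)"
    by (simp add: deriv_term sum_distrib_left sum_negf del: power_Suc)
  moreover have "F * (\<Sum>i<N. (1 - F) ^ i) = 1 - (1 - F) ^ N"
    using one_diff_power_eq[of "1 - F" N] by simp
  ultimately show ?thesis by (metis mult.left_commute)
qed

lemma fps_deriv_ln1:
  fixes F :: "'a::comm_ring_1 fps"
  assumes inv: "\<And>k. k > 0 \<Longrightarrow> of_nat k * (natinv k :: 'a) = 1"
    and F0: "F $ 0 = 1"
  shows "F * fps_deriv (fps_ln1 F) = fps_deriv F"
proof (rule fps_ext)
  fix m
  let ?L = "fps_ln1_trunc (Suc m) F"
  have "(F * fps_deriv (fps_ln1 F)) $ m = (F * fps_deriv ?L) $ m"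
    unfolding fps_mult_nth by (intro sum.cong refl) (simp add: fps_ln1_nth_eq_trunc[OF F0, where N="Suc m"])
  also have "\<dots> = fps_deriv F $ m - (fps_deriv F * (1 - F) ^ Suc m) $ m"
    by (simp add: fps_deriv_ln1_trunc[OF inv] algebra_simps del: power_Suc)
  also have "(fps_deriv F * (1 - F) ^ Suc m) $ m = 0"
    unfolding fps_mult_nth using F0
    by (intro sum.neutral ballI) (simp add: power_nth_eq_0_below del: power_Suc)
  finally show "(F * fps_deriv (fps_ln1 F)) $ m = fps_deriv F $ m" by simp
qed

lemma fps_X_mult_cancel:
  fixes A B :: "'a::comm_ring_1 fps"
  assumes "fps_X * A = fps_X * B"
  shows "A = B"
  by (metis assms fps_shift_times_fps_X' mult.commute)

lemma fps_mult_left_cancel_unit: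
  fixes A B F :: "'a::comm_ring_1 fps"
  assumes "F $ 0 * y = 1" and "F * A = F * B"
  shows "A = B"
proof -
  have R: "fps_right_inverse F y * F = 1"
    using fps_right_inverse[OF assms(1)] by (simp add: mult.commute)
  have "A = fps_right_inverse F y * F * A" using R by simp
  also have "\<dots> = fps_right_inverse F y * F * B" using assms(2) by (simp add: mult.assoc)
  also have "\<dots> = B" using R by simp
  finally show ?thesis .
qed

lemma fps_eq_if_deriv_eq:
  fixes A B :: "'a::comm_ring_1 fps"
  assumes inv: "\<And>k. k > 0 \<Longrightarrow> of_nat k * (natinv k :: 'a) = 1"
    and "fps_deriv A = fps_deriv B" and "A $ 0 = B $ 0"
  shows "A = B"
proof (rule fps_ext)
  fix n show "A $ n = B $ n"
  proof (cases n)
    case (Suc m)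
    have "of_nat (Suc m) * A $ Suc m = of_nat (Suc m) * B $ Suc m"
      using arg_cong[OF assms(2), of "\<lambda>A. A $ m"] by simp
    then have "natinv (Suc m) * of_nat (Suc m) * A $ Suc m =
        natinv (Suc m) * of_nat (Suc m) * B $ Suc m"
      by (simp add: mult.assoc)
    then show ?thesis using inv[of "Suc m"] Suc by (simp add: mult.commute)
  qed (use assms(3) in simp)
qed

theorem theorem5p8:
  fixes P :: "nat set"
  assumes "\<And>k::nat. k > 0 \<Longrightarrow> \<exists>x::'a::comm_ring_1. of_nat k * x = 1"
  shows "(XiCOMP P :: 'a fps) = FP P * fps_ln1 (FP P)"
proof -
  have inv: "\<And>k. k > 0 \<Longrightarrow> of_nat k * (natinv k :: 'a) = 1"
    using natinv_inverse[OF assms] .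
  define F C where "F = (FP P :: 'a fps)" and "C = (egf (num_connected P) :: 'a fps)"
  have F0: "F $ 0 * 1 = 1" using FP_nth_0[OF inv] by (simp add: F_def)
  have "fps_X * fps_deriv F = fps_X * (fps_deriv C * F)"
    unfolding F_def C_def FP_eq_egf mult.assoc[symmetric] fps_X_mult_deriv_egf
    by (simp add: egf_mult[OF inv] mult_num_Pfuns)
  then have "F * fps_deriv (fps_ln1 F) = F * fps_deriv C"
    using fps_deriv_ln1[OF inv] F0 by (simp add: fps_X_mult_cancel mult.commute)
  then have "fps_deriv (fps_ln1 F) = fps_deriv C" by (rule fps_mult_left_cancel_unit[OF F0])
  moreover have "fps_ln1 F $ 0 = C $ 0"
    by (simp add: fps_ln1_def C_def egf_def num_connected_def connected_Pfuns_def connected_fun_def)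
  ultimately have "fps_ln1 F = C" using fps_eq_if_deriv_eq[OF inv] by blast
  moreover have "XiCOMP P = C * F"
    unfolding XiCOMP_eq_egf C_def F_def FP_eq_egf by (simp add: egf_mult[OF inv] sum_ncomp_Pfuns)
  ultimately show ?thesis by (simp add: F_def mult.commute)
qed

end
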